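(* Let $k\ge1$ and $n>1$ be integers. Define $k\uparrow\uparrow1=k$ and $k\uparrow\uparrow(j+1)=k^{\,k\uparrow\uparrow j}$ for $j\ge1$. Then the sequence $(k\uparrow\uparrow j)_{j\ge1}$ converges in the ring $\mathbb{Z}_n$ of $n$-adic integers.
   Context: For an integer $n>1$, $\mathbb{Z}_n=\varprojlim_m \mathbb{Z}/n^m\mathbb{Z}$ is the ring of $n$-adic integers; a sequence of integers converges in $\mathbb{Z}_n$ iff for every $m\ge1$ its residues modulo $n^m$ are eventually constant. *)

theory Defs
  imports Main
begin

text \<open>Tetration: tetr k 1 = k, tetr k (j+1) = k ^ (tetr k j). We set tetr k 0 = 1
  (the value at 0 is irrelevant, since the sequence is indexed from j >= 1).\<close>
fun tetr :: "nat \<Rightarrow> nat \<Rightarrow> nat" where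
  "tetr k 0 = 1"
| "tetr k (Suc j) = k ^ tetr k j"

text \<open>Convergence in the n-adic integers Z_n of an integer sequence (indexed by j >= 1):
  for every m >= 1 the residues modulo n^m are eventually constant.\<close>
definition nadic_convergent :: "int \<Rightarrow> (nat \<Rightarrow> int) \<Rightarrow> bool" where
  "nadic_convergent n a \<longleftrightarrow>
     (\<forall>m::nat. m \<ge> 1 \<longrightarrow> (\<exists>N\<ge>1. \<forall>j\<ge>N. a j mod n ^ m = a N mod n ^ m))"

end

theory Submission
  imports Defs
begin

text \<open>For every modulus \<open>M\<close> the residues \<open>tetr k j mod M\<close> become constant, by strong
  induction on \<open>M\<close>. The powers \<open>k ^ x mod M\<close> are eventually periodic in \<open>x\<close> with some
  period \<open>p < M\<close>; by induction \<open>tetr k j mod p\<close> is eventually constant, and since the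
  exponents \<open>tetr k j \<ge> j\<close> eventually pass the preperiod, so is
  \<open>tetr k (j + 1) mod M = k ^ tetr k j mod M\<close>.\<close>

lemma power_mod_shift_period:
  fixes k M i p x :: nat
  assumes "k ^ (i + p) mod M = k ^ i mod M" and "i \<le> x"
  shows "k ^ (x + p) mod M = k ^ x mod M"
proof -
  have "k ^ (x + p) mod M = k ^ (x - i) * (k ^ (i + p) mod M) mod M"
    using assms(2) by (metis mod_mult_right_eq add.assoc le_add_diff_inverse2 power_add)
  also have "\<dots> = k ^ (x - i) * k ^ i mod M"
    using assms(1) by (metis mod_mult_right_eq)
  also have "k ^ (x - i) * k ^ i = k ^ x"
    using assms(2) by (simp flip: power_add)
  finally show ?thesis .
qed

lemma power_mod_shift_multiple_period:
  fixes k M i p x q :: nat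
  assumes "k ^ (i + p) mod M = k ^ i mod M" and "i \<le> x"
  shows "k ^ (x + p * q) mod M = k ^ x mod M"
proof (induction q)
  case (Suc q)
  have "k ^ (x + p * Suc q) = k ^ ((x + p * q) + p)"
    by (simp add: algebra_simps)
  then show ?case
    using power_mod_shift_period[OF assms(1), of "x + p * q"] assms(2) Suc by simp
qed simp

lemma power_mod_cong_exponent:
  fixes k M i p x y :: nat
  assumes "k ^ (i + p) mod M = k ^ i mod M" and "i \<le> x" and "i \<le> y"
    and "x mod p = y mod p"
  shows "k ^ x mod M = k ^ y mod M"
proof (cases "x \<le> y")
  case True
  then obtain q where "y = x + p * q"
    using assms(4) by (elim mod_eq_nat2E)
  then show ?thesis
    using power_mod_shift_multiple_period[OF assms(1,2)] by simp
next
  case False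
  then obtain q where "x = y + p * q"
    using assms(4) by (elim mod_eq_nat1E) simp
  then show ?thesis
    using power_mod_shift_multiple_period[OF assms(1,3)] by simp
qed

lemma power_mod_eventually_periodic:
  fixes k M :: nat
  assumes "M \<ge> 2"
  obtains i p where "0 < p" and "p < M" and "k ^ (i + p) mod M = k ^ i mod M"
proof (cases "\<exists>t. M dvd k ^ t")
  case True
  then obtain t where "M dvd k ^ t" by blast
  then have "M dvd k ^ (t + 1)"
    by (simp add: dvd_mult2)
  with \<open>M dvd k ^ t\<close> have "k ^ (t + 1) mod M = k ^ t mod M"
    by simp
  with assms that[of 1 t] show ?thesis by simp
next
  case False
  \<comment> \<open>All \<open>M\<close> residues \<open>k ^ t mod M\<close>, \<open>1 \<le> t \<le> M\<close>, avoid \<open>0\<close>, so two of them coincide.\<close>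
  let ?f = "\<lambda>t. k ^ t mod M"
  have "?f ` {1..M} \<subseteq> {1..<M}"
    using False assms by (auto simp: dvd_eq_mod_eq_0 Suc_le_eq)
  then have "card (?f ` {1..M}) \<le> M - 1"
    using card_mono[OF finite_atLeastLessThan] by fastforce
  then have "card (?f ` {1..M}) < card {1..M}"
    using assms by simp
  then obtain s t where st: "s \<in> {1..M}" "t \<in> {1..M}" "s < t" "?f s = ?f t"
    using pigeonhole unfolding inj_on_def by (metis linorder_neq_iff)
  then have "k ^ (s + (t - s)) mod M = k ^ s mod M"
    by simp
  moreover have "0 < t - s" and "t - s < M"
    using st by auto
  ultimately show ?thesis
    using that by blast
qed

lemma tetr_ge_index:
  assumes "k \<ge> 2"
  shows "j \<le> tetr k j"
proof (induction j)
  case (Suc j)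
  have "tetr k j < 2 ^ tetr k j"
    by simp
  also have "\<dots> \<le> k ^ tetr k j"
    using assms by (simp add: power_mono)
  finally show ?case
    using Suc by simp
qed simp

lemma tetr_one: "tetr 1 j = 1"
  by (induction j) auto

lemma tetr_mod_eventually_constant:
  fixes k M :: nat
  assumes "k \<ge> 1" and "M \<ge> 1"
  shows "\<exists>N. \<forall>j\<ge>N. tetr k j mod M = tetr k N mod M"
  using assms(2)
proof (induction M rule: less_induct)
  case (less M)
  show ?case
  proof (cases "k = 1 \<or> M = 1")
    case True
    then show ?thesis
    proof
      assume "k = 1"
      then have "tetr k j = 1" for j
        by (simp only: tetr_one)
      then show ?thesis by simp
    next
      assume "M = 1"
      then show ?thesis by simp
    qed
  next
    case False
    with assms(1) less.prems have "k \<ge> 2" and "M \<ge> 2"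
      by auto
    obtain i p where "0 < p" "p < M" and period: "k ^ (i + p) mod M = k ^ i mod M"
      using power_mod_eventually_periodic[OF \<open>M \<ge> 2\<close>] .
    then have "1 \<le> p"
      by simp
    then obtain N where N: "\<forall>j\<ge>N. tetr k j mod p = tetr k N mod p"
      using less.IH[OF \<open>p < M\<close>] by blast
    define N' where "N' = max N i"
    have step: "tetr k (Suc j) mod M = tetr k (Suc N') mod M" if "j \<ge> N'" for j
    proof -
      have "i \<le> tetr k j" and "i \<le> tetr k N'"
        using tetr_ge_index[OF \<open>k \<ge> 2\<close>] that N'_def by (meson le_trans max.boundedE)+
      moreover have "tetr k j mod p = tetr k N' mod p"
        using N that N'_def by (metis max.boundedE max.cobounded1)
      ultimately show ?thesis
        using power_mod_cong_exponent[OF period, of "tetr k j" "tetr k N'"] by simp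
    qed
    have "\<forall>j\<ge>Suc N'. tetr k j mod M = tetr k (Suc N') mod M"
    proof (intro allI impI)
      fix j
      assume "Suc N' \<le> j"
      then obtain j' where "j = Suc j'" and "N' \<le> j'"
        by (cases j) auto
      then show "tetr k j mod M = tetr k (Suc N') mod M"
        using step by blast
    qed
    then show ?thesis by blast
  qed
qed

theorem mainTheorem4:
  fixes k :: nat and n :: int
  assumes "k \<ge> 1" and "n > 1"
  shows "nadic_convergent n (\<lambda>j. int (tetr k j))"
  unfolding nadic_convergent_def
proof (intro allI impI)
  fix m :: nat
  define M where "M = nat (n ^ m)"
  have "n ^ m \<ge> 1"
    using assms(2) by simp
  then have M: "int M = n ^ m" "M \<ge> 1"
    unfolding M_def by auto
  then obtain N where N: "\<forall>j\<ge>N. tetr k j mod M = tetr k N mod M"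
    using tetr_mod_eventually_constant assms(1) by blast
  have "\<forall>j\<ge>max N 1. int (tetr k j) mod n ^ m = int (tetr k (max N 1)) mod n ^ m"
    using N M(1) by (metis max.boundedE max.cobounded1 of_nat_mod)
  then show "\<exists>N\<ge>1. \<forall>j\<ge>N. int (tetr k j) mod n ^ m = int (tetr k N) mod n ^ m"
    by (metis max.cobounded2)
qed

end
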